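(* In the i.d. model with $\mathbb{E}X_i^2<\infty$, the moment $T_n^{\mathrm{last}}$ of the last collision satisfies $T_n^{\mathrm{last}}\xrightarrow{\mathbb{P}}1$ as $n\to\infty$.
   Context: Sticky particle system: $n$ point particles, each of mass $1/n$, zero initial velocities, numbered $1,\dots,n$ from left to right; between collisions each particle (cluster) moves with acceleration equal to the total mass to its right minus the total mass to its left; colliding particles stick together, conserving mass and momentum. i.d. model: $(X_i)$ i.i.d. nonnegative with $\mathbb{E}X_i=1$, $S_j=X_1+\dots+X_j$, particle $j$ starts at $S_j/n$. $T_n^{\mathrm{last}}$ is the time after which all $n$ particles form a single cluster (the time of the last collision). *)

theory Defs
  imports "HOL-Probability.Probability"
begin

text \<open>Event-driven description of the sticky particle system.
A cluster is a triple (mass, position, velocity); a state is the list of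
clusters ordered from left to right.\<close>

type_synonym cluster = "real \<times> real \<times> real"

definition cmass :: "cluster \<Rightarrow> real" where "cmass c = fst c"
definition cpos :: "cluster \<Rightarrow> real" where "cpos c = fst (snd c)"
definition cvel :: "cluster \<Rightarrow> real" where "cvel c = snd (snd c)"

definition accel :: "cluster list \<Rightarrow> nat \<Rightarrow> real" where
  "accel cs k = (\<Sum>i\<in>{k<..<length cs}. cmass (cs ! i)) - (\<Sum>i<k. cmass (cs ! i))"

definition gap_fun :: "cluster list \<Rightarrow> nat \<Rightarrow> real \<Rightarrow> real" where
  "gap_fun cs k t =
     (cpos (cs ! Suc k) - cpos (cs ! k)) + (cvel (cs ! Suc k) - cvel (cs ! k)) * t
     + (accel cs (Suc k) - accel cs k) * t ^ 2 / 2"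

definition coll_time :: "cluster list \<Rightarrow> nat \<Rightarrow> real" where
  "coll_time cs k = Inf {t. 0 \<le> t \<and> gap_fun cs k t \<le> 0}"

text \<open>Time until the next collision (for at least two clusters).\<close>
definition next_time :: "cluster list \<Rightarrow> real" where
  "next_time cs = Min (coll_time cs ` {..<length cs - 1})"

definition evolve :: "cluster list \<Rightarrow> real \<Rightarrow> cluster list" where
  "evolve cs tau = map (\<lambda>k. (cmass (cs ! k),
        cpos (cs ! k) + cvel (cs ! k) * tau + accel cs k * tau ^ 2 / 2,
        cvel (cs ! k) + accel cs k * tau)) [0..<length cs]"

definition combine :: "cluster \<Rightarrow> cluster \<Rightarrow> cluster" where
  "combine c1 c2 = (cmass c1 + cmass c2, cpos c1,
      (cmass c1 * cvel c1 + cmass c2 * cvel c2) / (cmass c1 + cmass c2))"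

fun merge :: "cluster list \<Rightarrow> cluster list" where
  "merge [] = []"
| "merge [c] = [c]"
| "merge (c1 # c2 # cs) =
     (if cpos c1 = cpos c2 then merge (combine c1 c2 # cs) else c1 # merge (c2 # cs))"

definition step :: "cluster list \<Rightarrow> real \<times> cluster list" where
  "step cs = (let tau = next_time cs in (tau, merge (evolve cs tau)))"

text \<open>Total time until a single cluster remains (with fuel k; each event
reduces the number of clusters, so fuel n suffices for n particles).\<close>
fun time_to_single :: "nat \<Rightarrow> cluster list \<Rightarrow> real" where
  "time_to_single 0 cs = 0"
| "time_to_single (Suc k) cs =
     (if length cs \<le> 1 then 0 else fst (step cs) + time_to_single k (snd (step cs)))"

text \<open>Initial state of the i.d. model: particle j (j = 1..n) of mass 1/n at S_j/n, velocity 0.\<close>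
definition init_state :: "nat \<Rightarrow> (nat \<Rightarrow> real) \<Rightarrow> cluster list" where
  "init_state n x = map (\<lambda>j. (1 / real n, (\<Sum>i=1..j. x i) / real n, 0)) [1..<Suc n]"

definition T_last :: "nat \<Rightarrow> (nat \<Rightarrow> real) \<Rightarrow> real" where
  "T_last n x = time_to_single n (init_state n x)"

end

theory Submission
  imports Defs "HOL-Probability.Probability"
begin

text \<open>
Mass, the first moment \<open>\<Sum> m x\<close> and the momentum \<open>\<Sum> m v\<close> of every initial block of
particles \<open>1..k\<close> evolve explicitly in time: the internal forces of the block cancel, so it
feels the net force \<open>(k/n)(1 - k/n)\<close>, and sticking collisions never split a block.
Hence every prefix of clusters at time \<open>t\<close> has mass \<open>k/n\<close> and first moment
\<open>P(k) + (k/n)(1 - k/n) t\<^sup>2/2\<close>, where \<open>P(k)\<close> is its initial first moment. At the last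
collision all clusters sit at one point \<open>p = P(n)\<close>; comparing with the first cluster
(mass \<open>k/n\<close>, \<open>0 < k < n\<close>) gives \<open>(k/n) P(n) - P(k) = (k/n)(1 - k/n) T\<^sup>2/2\<close>.
If the partial sums \<open>S\<^sub>j\<close> stay within \<open>\<delta>n\<close> of \<open>j\<close>, this forces \<open>|T\<^sup>2 - 1| \<le> 4\<delta>\<close>.
By Chebyshev's inequality and the monotonicity of \<open>S\<^sub>j\<close>, it suffices to control \<open>S\<^sub>j\<close> on a
grid of fixed size, which fails with probability \<open>O(1/n)\<close>.
\<close>

section \<open>Sticking collisions\<close>

definition prefix_sum :: "(cluster \<Rightarrow> real) \<Rightarrow> cluster list \<Rightarrow> nat \<Rightarrow> real" where
  "prefix_sum w cs i = sum_list (map w (take i cs))"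

definition collision_additive :: "(cluster \<Rightarrow> real) \<Rightarrow> bool" where
  "collision_additive w \<longleftrightarrow> (\<forall>c1 c2. cpos c1 = cpos c2 \<longrightarrow> 0 < cmass c1 \<longrightarrow> 0 < cmass c2 \<longrightarrow>
      w (combine c1 c2) = w c1 + w c2)"

lemma collision_additiveD:
  "collision_additive w \<Longrightarrow> cpos c1 = cpos c2 \<Longrightarrow> 0 < cmass c1 \<Longrightarrow> 0 < cmass c2 \<Longrightarrow>
   w (combine c1 c2) = w c1 + w c2"
  unfolding collision_additive_def by blast

lemma collision_additive_mass: "collision_additive cmass"
  by (simp add: collision_additive_def combine_def cmass_def)

lemma collision_additive_moment: "collision_additive (\<lambda>c. cmass c * cpos c)"
  by (simp add: collision_additive_def combine_def cmass_def cpos_def algebra_simps)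

lemma collision_additive_momentum: "collision_additive (\<lambda>c. cmass c * cvel c)"
  by (auto simp add: collision_additive_def combine_def cmass_def cvel_def cpos_def field_simps)

lemma cpos_combine [simp]: "cpos (combine c1 c2) = cpos c1"
  by (simp add: combine_def cpos_def)

lemma cmass_combine [simp]: "cmass (combine c1 c2) = cmass c1 + cmass c2"
  by (simp add: combine_def cmass_def)

lemma cvel_combine:
  "cvel (combine c1 c2) = (cmass c1 * cvel c1 + cmass c2 * cvel c2) / (cmass c1 + cmass c2)"
  by (simp add: combine_def cvel_def)

lemma merge_pos_mass: "\<forall>c\<in>set cs. 0 < cmass c \<Longrightarrow> \<forall>c\<in>set (merge cs). 0 < cmass c"
  by (induction cs rule: merge.induct) auto

lemma length_merge_le: "length (merge cs) \<le> length cs"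
  by (induction cs rule: merge.induct) auto

lemma merge_not_Nil: "cs \<noteq> [] \<Longrightarrow> merge cs \<noteq> []"
  by (induction cs rule: merge.induct) auto

lemma prefix_sum_conv_sum: "i \<le> length cs \<Longrightarrow> prefix_sum w cs i = (\<Sum>l<i. w (cs ! l))"
  unfolding prefix_sum_def by (simp add: sum_list_sum_nth min_def atLeast0LessThan)

lemma prefix_sum_length: "prefix_sum w cs (length cs) = sum_list (map w cs)"
  by (simp add: prefix_sum_def)

text \<open>Every prefix of the merged list is the merge of a prefix of the original list.\<close>

lemma prefix_sum_merge:
  "\<forall>c\<in>set cs. 0 < cmass c \<Longrightarrow> i \<le> length (merge cs) \<Longrightarrow>
   \<exists>j \<le> length cs. \<forall>w. collision_additive w \<longrightarrow> prefix_sum w (merge cs) i = prefix_sum w cs j"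
proof (induction cs arbitrary: i rule: merge.induct)
  case (3 c1 c2 cs)
  show ?case
  proof (cases "cpos c1 = cpos c2")
    case True
    have pos: "\<forall>c\<in>set (combine c1 c2 # cs). 0 < cmass c" using "3.prems" by auto
    from "3.IH"(1)[OF True pos] "3.prems"(2) True
    obtain j where j: "j \<le> length (combine c1 c2 # cs)"
      "\<forall>w. collision_additive w \<longrightarrow>
         prefix_sum w (merge (combine c1 c2 # cs)) i = prefix_sum w (combine c1 c2 # cs) j"
      by auto
    show ?thesis
    proof (cases j)
      case 0
      then show ?thesis using j True by (intro exI[of _ 0]) (auto simp: prefix_sum_def)
    next
      case (Suc j')
      have "prefix_sum w (merge (c1 # c2 # cs)) i = prefix_sum w (c1 # c2 # cs) (Suc (Suc j'))"
        if w: "collision_additive w" for w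
        using j Suc True w collision_additiveD[OF w True] "3.prems"(1)
        by (auto simp: prefix_sum_def)
      then show ?thesis using j Suc by (intro exI[of _ "Suc (Suc j')"]) auto
    qed
  next
    case False
    show ?thesis
    proof (cases i)
      case 0
      then show ?thesis by (intro exI[of _ 0]) (auto simp: prefix_sum_def)
    next
      case (Suc i')
      have pos: "\<forall>c\<in>set (c2 # cs). 0 < cmass c" using "3.prems" by auto
      from "3.IH"(2)[OF False pos, of i'] "3.prems"(2) False Suc
      obtain j where j: "j \<le> length (c2 # cs)"
        "\<forall>w. collision_additive w \<longrightarrow> prefix_sum w (merge (c2 # cs)) i' = prefix_sum w (c2 # cs) j"
        by auto
      show ?thesis using j Suc False by (intro exI[of _ "Suc j"]) (auto simp: prefix_sum_def)
    qed
  qed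
qed auto

lemma sum_list_merge:
  "\<forall>c\<in>set cs. 0 < cmass c \<Longrightarrow> collision_additive w \<Longrightarrow>
   sum_list (map w (merge cs)) = sum_list (map w cs)"
proof (induction cs rule: merge.induct)
  case (3 c1 c2 cs)
  show ?case
  proof (cases "cpos c1 = cpos c2")
    case True
    then show ?thesis
      using "3.IH"(1)[OF True] "3.prems" collision_additiveD[OF "3.prems"(2) True] by simp
  next
    case False
    then show ?thesis using "3.IH"(2)[OF False] "3.prems" by simp
  qed
qed auto

lemma merge_length_le_1_same_pos:
  "length (merge cs) \<le> 1 \<Longrightarrow> \<forall>c\<in>set cs. cpos c = cpos (hd cs)"
proof (induction cs rule: merge.induct)
  case (3 c1 c2 cs)
  show ?case
  proof (cases "cpos c1 = cpos c2")
    case True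
    then show ?thesis using "3.IH"(1)[OF True] "3.prems" by simp
  next
    case False
    have "merge (c2 # cs) \<noteq> []" by (rule merge_not_Nil) simp
    then have "2 \<le> length (merge (c1 # c2 # cs))" using False by (cases "merge (c2 # cs)") auto
    with "3.prems" show ?thesis by simp
  qed
qed auto

lemma length_merge_less:
  "Suc l < length cs \<Longrightarrow> cpos (cs ! l) = cpos (cs ! Suc l) \<Longrightarrow> length (merge cs) < length cs"
proof (induction cs arbitrary: l rule: merge.induct)
  case (3 c1 c2 cs)
  show ?case
  proof (cases "cpos c1 = cpos c2")
    case True
    then show ?thesis using length_merge_le[of "combine c1 c2 # cs"] by simp
  next
    case False
    then obtain l' where "l = Suc l'" using "3.prems" by (cases l) auto
    with "3.prems" False show ?thesis using "3.IH"(2)[OF False, of l'] by auto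
  qed
qed auto

lemma cpos_merge: "c \<in> set (merge cs) \<Longrightarrow> \<exists>c'\<in>set cs. cpos c = cpos c'"
proof (induction cs rule: merge.induct)
  case (3 c1 c2 cs)
  then show ?case by (cases "cpos c1 = cpos c2") fastforce+
qed auto

lemma sorted_cpos_merge: "sorted (map cpos cs) \<Longrightarrow> sorted (map cpos (merge cs))"
proof (induction cs rule: merge.induct)
  case (3 c1 c2 cs)
  show ?case
  proof (cases "cpos c1 = cpos c2")
    case True
    with "3.prems" "3.IH"(1)[OF True] show ?thesis by simp
  next
    case False
    have "cpos c1 \<le> cpos c" if "c \<in> set (merge (c2 # cs))" for c
      using cpos_merge[OF that] "3.prems" by fastforce
    with "3.IH"(2)[OF False] "3.prems" False show ?thesis by simp
  qed
qed auto

section \<open>The moment invariant\<close>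

definition init_moment :: "nat \<Rightarrow> (nat \<Rightarrow> real) \<Rightarrow> nat \<Rightarrow> real" where
  "init_moment n x k = (\<Sum>j=1..k. (1 / real n) * ((\<Sum>i=1..j. x i) / real n))"

definition moment_inv :: "nat \<Rightarrow> (nat \<Rightarrow> real) \<Rightarrow> real \<Rightarrow> cluster list \<Rightarrow> bool" where
  "moment_inv n x t cs \<longleftrightarrow> (\<forall>c\<in>set cs. 0 < cmass c) \<and> sum_list (map cmass cs) = 1 \<and>
     (\<forall>i \<le> length cs. \<exists>k \<le> n. prefix_sum cmass cs i = real k / real n \<and>
        prefix_sum (\<lambda>c. cmass c * cpos c) cs i
          = init_moment n x k + (real k / real n) * (1 - real k / real n) * t\<^sup>2 / 2 \<and>
        prefix_sum (\<lambda>c. cmass c * cvel c) cs i = (real k / real n) * (1 - real k / real n) * t)"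

lemma moment_inv_merge:
  assumes inv: "moment_inv n x t cs"
  shows "moment_inv n x t (merge cs)"
proof -
  have pos: "\<forall>c\<in>set cs. 0 < cmass c" using inv by (simp add: moment_inv_def)
  have "\<exists>k \<le> n. prefix_sum cmass (merge cs) i = real k / real n \<and>
      prefix_sum (\<lambda>c. cmass c * cpos c) (merge cs) i
        = init_moment n x k + (real k / real n) * (1 - real k / real n) * t\<^sup>2 / 2 \<and>
      prefix_sum (\<lambda>c. cmass c * cvel c) (merge cs) i
        = (real k / real n) * (1 - real k / real n) * t"
    if i: "i \<le> length (merge cs)" for i
  proof -
    obtain j where "j \<le> length cs"
      and j: "\<forall>w. collision_additive w \<longrightarrow> prefix_sum w (merge cs) i = prefix_sum w cs j"
      using prefix_sum_merge[OF pos i] by blast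
    with inv show ?thesis
      using collision_additive_mass collision_additive_moment collision_additive_momentum
      unfolding moment_inv_def by auto
  qed
  then show ?thesis
    using merge_pos_mass[OF pos] sum_list_merge[OF pos collision_additive_mass] inv
    by (simp add: moment_inv_def)
qed

lemma length_evolve [simp]: "length (evolve cs tau) = length cs"
  by (simp add: evolve_def)

lemma evolve_components:
  assumes "l < length cs"
  shows "cmass (evolve cs tau ! l) = cmass (cs ! l)"
    "cpos (evolve cs tau ! l) = cpos (cs ! l) + cvel (cs ! l) * tau + accel cs l * tau\<^sup>2 / 2"
    "cvel (evolve cs tau ! l) = cvel (cs ! l) + accel cs l * tau"
  using assms by (simp_all add: evolve_def cmass_def cpos_def cvel_def)

lemma evolve_pos_mass: "\<forall>c\<in>set cs. 0 < cmass c \<Longrightarrow> \<forall>c\<in>set (evolve cs tau). 0 < cmass c"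
  by (metis evolve_components(1) in_set_conv_nth length_evolve)

lemma sum_greaterThanLessThan_eq:
  fixes f :: "nat \<Rightarrow> 'a::ab_group_add"
  assumes "i < N"
  shows "(\<Sum>r\<in>{i<..<N}. f r) = (\<Sum>r<N. f r) - (\<Sum>r<i. f r) - f i"
proof -
  have "{..<N} = {..<i} \<union> {i} \<union> {i<..<N}" using assms by auto
  moreover have "(\<Sum>r\<in>{..<i} \<union> {i} \<union> {i<..<N}. f r) = (\<Sum>r<i. f r) + f i + (\<Sum>r\<in>{i<..<N}. f r)"
    by (subst sum.union_disjoint; auto)+
  ultimately show ?thesis by (simp add: algebra_simps)
qed

lemma accel_eq:
  "k < length cs \<Longrightarrow>
   accel cs k = (\<Sum>r<length cs. cmass (cs ! r)) - 2 * (\<Sum>r<k. cmass (cs ! r)) - cmass (cs ! k)"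
  unfolding accel_def by (simp add: sum_greaterThanLessThan_eq)

lemma accel_Suc_diff:
  "Suc k < length cs \<Longrightarrow> accel cs (Suc k) - accel cs k = - (cmass (cs ! k) + cmass (cs ! Suc k))"
  by (simp add: accel_eq)

text \<open>The internal forces of the first \<open>i\<close> clusters cancel: they feel the mass outside them.\<close>

lemma sum_mass_accel:
  assumes "i \<le> length cs"
  shows "(\<Sum>l<i. cmass (cs ! l) * accel cs l) =
     (\<Sum>l<i. cmass (cs ! l)) * ((\<Sum>l<length cs. cmass (cs ! l)) - (\<Sum>l<i. cmass (cs ! l)))"
  using assms by (induction i) (simp_all add: accel_eq algebra_simps)

lemma prefix_sums_evolve:
  assumes "i \<le> length cs"
  shows "prefix_sum cmass (evolve cs tau) i = prefix_sum cmass cs i"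
    "prefix_sum (\<lambda>c. cmass c * cpos c) (evolve cs tau) i =
      prefix_sum (\<lambda>c. cmass c * cpos c) cs i + tau * prefix_sum (\<lambda>c. cmass c * cvel c) cs i
      + tau\<^sup>2 / 2 * (\<Sum>l<i. cmass (cs ! l) * accel cs l)"
    "prefix_sum (\<lambda>c. cmass c * cvel c) (evolve cs tau) i =
      prefix_sum (\<lambda>c. cmass c * cvel c) cs i + tau * (\<Sum>l<i. cmass (cs ! l) * accel cs l)"
  using assms by (simp_all add: prefix_sum_conv_sum evolve_components sum.distrib
      sum_distrib_left sum_divide_distrib algebra_simps)

lemma moment_inv_evolve:
  assumes inv: "moment_inv n x t cs"
  shows "moment_inv n x (t + tau) (evolve cs tau)"
proof -
  have pos: "\<forall>c\<in>set cs. 0 < cmass c" using inv by (simp add: moment_inv_def)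
  have total: "(\<Sum>l<length cs. cmass (cs ! l)) = 1"
    using inv prefix_sum_conv_sum[of "length cs" cs cmass] prefix_sum_length[of cmass cs]
    by (simp add: moment_inv_def)
  have "\<exists>k \<le> n. prefix_sum cmass (evolve cs tau) i = real k / real n \<and>
      prefix_sum (\<lambda>c. cmass c * cpos c) (evolve cs tau) i
        = init_moment n x k + (real k / real n) * (1 - real k / real n) * (t + tau)\<^sup>2 / 2 \<and>
      prefix_sum (\<lambda>c. cmass c * cvel c) (evolve cs tau) i
        = (real k / real n) * (1 - real k / real n) * (t + tau)"
    if "i \<le> length (evolve cs tau)" for i
  proof -
    from that have i: "i \<le> length cs" by simp
    obtain k where "k \<le> n" and mass: "prefix_sum cmass cs i = real k / real n"
      and moment: "prefix_sum (\<lambda>c. cmass c * cpos c) cs i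
          = init_moment n x k + (real k / real n) * (1 - real k / real n) * t\<^sup>2 / 2"
      and momentum: "prefix_sum (\<lambda>c. cmass c * cvel c) cs i
          = (real k / real n) * (1 - real k / real n) * t"
      using inv i unfolding moment_inv_def by blast
    define \<mu> where "\<mu> = real k / real n"
    have force: "(\<Sum>l<i. cmass (cs ! l) * accel cs l) = \<mu> * (1 - \<mu>)"
      using sum_mass_accel[OF i] total mass prefix_sum_conv_sum[OF i, of cmass] by (simp add: \<mu>_def)
    have "prefix_sum (\<lambda>c. cmass c * cpos c) (evolve cs tau) i
        = init_moment n x k + \<mu> * (1 - \<mu>) * (t + tau)\<^sup>2 / 2"
      unfolding prefix_sums_evolve(2)[OF i] moment momentum force \<mu>_def[symmetric]
      by (simp add: power2_eq_square field_simps)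
    moreover have "prefix_sum (\<lambda>c. cmass c * cvel c) (evolve cs tau) i = \<mu> * (1 - \<mu>) * (t + tau)"
      unfolding prefix_sums_evolve(3)[OF i] momentum force \<mu>_def[symmetric]
      by (simp add: algebra_simps)
    ultimately show ?thesis using \<open>k \<le> n\<close> mass prefix_sums_evolve(1)[OF i] unfolding \<mu>_def by auto
  qed
  moreover have "sum_list (map cmass (evolve cs tau)) = 1"
    using total prefix_sum_conv_sum[of "length cs" "evolve cs tau" cmass]
      prefix_sum_length[of cmass "evolve cs tau"]
    by (simp add: evolve_components)
  ultimately show ?thesis using evolve_pos_mass[OF pos] by (simp add: moment_inv_def)
qed

definition first_zero :: "real \<Rightarrow> real \<Rightarrow> real \<Rightarrow> real" where
  "first_zero A B D = (if A \<le> 0 then 0 else (B + sqrt (B\<^sup>2 - 2 * A * D)) / (- D))"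

lemma quadratic_first_zero:
  fixes A B D :: real
  assumes D: "D < 0" and A: "0 < A"
  defines "r \<equiv> (B + sqrt (B\<^sup>2 - 2 * A * D)) / (- D)"
  shows "0 < r" "A + B * r + D * r\<^sup>2 / 2 = 0"
    "\<And>t. 0 \<le> t \<Longrightarrow> t < r \<Longrightarrow> 0 < A + B * t + D * t\<^sup>2 / 2"
proof -
  define s where "s = sqrt (B\<^sup>2 - 2 * A * D)"
  have disc: "0 < B\<^sup>2 - 2 * A * D" using D A by (smt (verit) mult_pos_neg zero_le_power2)
  have s2: "s\<^sup>2 = B\<^sup>2 - 2 * A * D" unfolding s_def using disc by simp
  have "B\<^sup>2 < s\<^sup>2" using s2 D A by (smt (verit) mult_pos_neg)
  then have sB: "\<bar>B\<bar> < s" using disc by (simp add: s_def power2_less_imp_less)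
  define r' where "r' = (B - s) / (- D)"
  have r: "r = (B + s) / (- D)" by (simp add: r_def s_def)
  show "0 < r" unfolding r using sB D by (intro divide_pos_pos) auto
  have r': "r' < 0" unfolding r'_def using sB D by (intro divide_neg_pos) auto
  have "r * r' * D\<^sup>2 = B\<^sup>2 - s\<^sup>2"
    unfolding r r'_def using D by (simp add: field_simps power2_eq_square)
  then have "r * r' * D\<^sup>2 = 2 * A * D" using s2 by simp
  then have "(r * r' * D - 2 * A) * D = 0" by (simp add: power2_eq_square algebra_simps)
  then have "r * r' * D = 2 * A" using D by simp
  then have "D / 2 * (r * r') = A" by (simp add: algebra_simps)
  moreover have "D / 2 * (r + r') = - B" unfolding r r'_def using D by (simp add: field_simps)
  moreover have "D / 2 * (t - r) * (t - r') = D / 2 * t\<^sup>2 - D / 2 * (r + r') * t + D / 2 * (r * r')"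
    for t by (simp add: power2_eq_square field_simps)
  ultimately have factor: "A + B * t + D * t\<^sup>2 / 2 = D / 2 * (t - r) * (t - r')" for t
    by simp
  show "A + B * r + D * r\<^sup>2 / 2 = 0" using factor[of r] by simp
  fix t assume "0 \<le> t" "t < r"
  then have "0 < D / 2 * (t - r)" "0 < t - r'" using D r' by (auto intro: mult_neg_neg)
  then show "0 < A + B * t + D * t\<^sup>2 / 2" unfolding factor by simp
qed

lemma Inf_quadratic_nonpos:
  fixes A B D :: real
  assumes D: "D < 0"
  shows "Inf {t. 0 \<le> t \<and> A + B * t + D * t\<^sup>2 / 2 \<le> 0} = first_zero A B D"
proof (cases "A \<le> 0")
  case True
  then show ?thesis unfolding first_zero_def by (intro cInf_eq_minimum) auto
next
  case False
  note q = quadratic_first_zero[OF D, where A=A and B=B]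
  have "Inf {t. 0 \<le> t \<and> A + B * t + D * t\<^sup>2 / 2 \<le> 0} = (B + sqrt (B\<^sup>2 - 2 * A * D)) / (- D)"
  proof (rule cInf_eq_minimum)
    fix x assume "x \<in> {t. 0 \<le> t \<and> A + B * t + D * t\<^sup>2 / 2 \<le> 0}"
    then show "(B + sqrt (B\<^sup>2 - 2 * A * D)) / (- D) \<le> x" using q(3)[of x] False by force
  qed (use q(1,2) False in simp)
  then show ?thesis using False by (simp add: first_zero_def)
qed

lemma first_zero_props:
  fixes A B D :: real
  assumes D: "D < 0" and A: "0 \<le> A"
  shows "0 \<le> first_zero A B D" "A + B * first_zero A B D + D * (first_zero A B D)\<^sup>2 / 2 = 0"
    "\<And>t. 0 \<le> t \<Longrightarrow> t < first_zero A B D \<Longrightarrow> 0 < A + B * t + D * t\<^sup>2 / 2"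
proof -
  note q = quadratic_first_zero[OF D, where A=A and B=B]
  show "0 \<le> first_zero A B D" using q(1) by (cases "A \<le> 0") (auto simp: first_zero_def)
  show "A + B * first_zero A B D + D * (first_zero A B D)\<^sup>2 / 2 = 0"
    using q(2) A by (cases "A \<le> 0") (auto simp: first_zero_def)
  fix t assume "0 \<le> t" "t < first_zero A B D"
  then show "0 < A + B * t + D * t\<^sup>2 / 2"
    using q(3)[of t] A by (cases "A \<le> 0") (auto simp: first_zero_def)
qed

lemma coll_time_eq_first_zero:
  assumes pos: "\<forall>c\<in>set cs. 0 < cmass c" and k: "Suc k < length cs"
  shows "coll_time cs k = first_zero (cpos (cs ! Suc k) - cpos (cs ! k))
      (cvel (cs ! Suc k) - cvel (cs ! k)) (accel cs (Suc k) - accel cs k)"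
    and "accel cs (Suc k) - accel cs k < 0"
proof -
  have "cs ! k \<in> set cs" "cs ! Suc k \<in> set cs" using k by simp_all
  then show D: "accel cs (Suc k) - accel cs k < 0"
    unfolding accel_Suc_diff[OF k] using pos by (smt (verit))
  show "coll_time cs k = first_zero (cpos (cs ! Suc k) - cpos (cs ! k))
      (cvel (cs ! Suc k) - cvel (cs ! k)) (accel cs (Suc k) - accel cs k)"
    unfolding coll_time_def gap_fun_def by (rule Inf_quadratic_nonpos[OF D])
qed

lemma coll_time_props:
  assumes pos: "\<forall>c\<in>set cs. 0 < cmass c" and sorted: "sorted (map cpos cs)"
    and k: "Suc k < length cs"
  shows "0 \<le> coll_time cs k" "gap_fun cs k (coll_time cs k) = 0"
    "\<And>t. 0 \<le> t \<Longrightarrow> t < coll_time cs k \<Longrightarrow> 0 < gap_fun cs k t"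
proof -
  have "0 \<le> cpos (cs ! Suc k) - cpos (cs ! k)"
    using sorted k by (simp add: sorted_iff_nth_Suc)
  note props = first_zero_props[OF coll_time_eq_first_zero(2)[OF pos k] this]
  show "0 \<le> coll_time cs k" "gap_fun cs k (coll_time cs k) = 0"
    "\<And>t. 0 \<le> t \<Longrightarrow> t < coll_time cs k \<Longrightarrow> 0 < gap_fun cs k t"
    using props unfolding coll_time_eq_first_zero(1)[OF pos k] gap_fun_def by auto
qed

lemma cpos_evolve_gap:
  "Suc k < length cs \<Longrightarrow> cpos (evolve cs tau ! Suc k) - cpos (evolve cs tau ! k) = gap_fun cs k tau"
  by (simp add: evolve_components gap_fun_def field_simps)

lemma next_time_props:
  assumes pos: "\<forall>c\<in>set cs. 0 < cmass c" and sorted: "sorted (map cpos cs)"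
    and len: "2 \<le> length cs"
  shows "0 \<le> next_time cs" "sorted (map cpos (merge (evolve cs (next_time cs))))"
    "length (merge (evolve cs (next_time cs))) < length cs"
proof -
  let ?I = "{..<length cs - 1}" and ?tau = "next_time cs"
  have "0 \<in> ?I" using len by simp
  then have fin: "finite (coll_time cs ` ?I)" "coll_time cs ` ?I \<noteq> {}" by blast+
  have "?tau \<in> coll_time cs ` ?I" unfolding next_time_def by (rule Min_in[OF fin])
  then obtain k0 where "k0 \<in> ?I" and tau_k0: "?tau = coll_time cs k0" by blast
  then have k0: "Suc k0 < length cs" by simp
  have le: "?tau \<le> coll_time cs j" if "Suc j < length cs" for j
    unfolding next_time_def using fin(1) that by (intro Min_le) auto
  show tau: "0 \<le> ?tau" using coll_time_props(1)[OF pos sorted k0] tau_k0 by simp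
  have "0 \<le> gap_fun cs j ?tau" if j: "Suc j < length cs" for j
  proof (cases "?tau < coll_time cs j")
    case True
    then show ?thesis using coll_time_props(3)[OF pos sorted j tau] by simp
  next
    case False
    then show ?thesis using coll_time_props(2)[OF pos sorted j] le[OF j] by simp
  qed
  then have "sorted (map cpos (evolve cs ?tau))"
    unfolding sorted_iff_nth_Suc using cpos_evolve_gap[of _ cs ?tau] by force
  then show "sorted (map cpos (merge (evolve cs ?tau)))" by (rule sorted_cpos_merge)
  have "cpos (evolve cs ?tau ! k0) = cpos (evolve cs ?tau ! Suc k0)"
    using cpos_evolve_gap[OF k0, of ?tau] coll_time_props(2)[OF pos sorted k0] tau_k0 by simp
  then show "length (merge (evolve cs ?tau)) < length cs"
    using length_merge_less[of k0 "evolve cs ?tau"] k0 by simp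
qed

section \<open>The equation for the time of the last collision\<close>

definition last_collision_eq :: "nat \<Rightarrow> (nat \<Rightarrow> real) \<Rightarrow> real \<Rightarrow> bool" where
  "last_collision_eq n x T \<longleftrightarrow> (\<exists>k. 0 < k \<and> k < n \<and>
     real k / real n * init_moment n x n
       = init_moment n x k + real k / real n * (1 - real k / real n) * T\<^sup>2 / 2)"

text \<open>Just before the last merge all clusters are at one point \<open>p\<close>; the whole system and
  the first cluster then have first moments \<open>p\<close> and \<open>p k/n\<close> respectively.\<close>

lemma last_collision_eq_if_merge_single:
  assumes inv: "moment_inv n x T cs" and len: "2 \<le> length cs" and single: "length (merge cs) \<le> 1"
  shows "last_collision_eq n x T"
proof -
  define p where "p = cpos (hd cs)"
  have pos: "\<forall>c\<in>set cs. 0 < cmass c" and total: "sum_list (map cmass cs) = 1"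
    using inv by (auto simp: moment_inv_def)
  have moment: "prefix_sum (\<lambda>c. cmass c * cpos c) cs i = p * prefix_sum cmass cs i"
    if "i \<le> length cs" for i
    using that merge_length_le_1_same_pos[OF single]
    by (simp add: prefix_sum_conv_sum p_def sum_distrib_left mult.commute)
  have total': "prefix_sum cmass cs (length cs) = 1" using total by (simp add: prefix_sum_length)
  obtain k' where "prefix_sum cmass cs (length cs) = real k' / real n"
    and "prefix_sum (\<lambda>c. cmass c * cpos c) cs (length cs)
      = init_moment n x k' + (real k' / real n) * (1 - real k' / real n) * T\<^sup>2 / 2"
    using inv unfolding moment_inv_def by blast
  moreover from this(1) have "n \<noteq> 0" "k' = n" using total' by (auto simp: divide_eq_1_iff)
  ultimately have p: "p = init_moment n x n" using moment[of "length cs"] total' by simp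
  have "cs ! 0 \<in> set cs" "cs ! 1 \<in> set cs" using len by (intro nth_mem; linarith)+
  then have "0 < cmass (cs ! 0)" "0 < cmass (cs ! 1)" using pos by auto
  obtain k where "prefix_sum cmass cs 1 = real k / real n"
    and first: "prefix_sum (\<lambda>c. cmass c * cpos c) cs 1
      = init_moment n x k + (real k / real n) * (1 - real k / real n) * T\<^sup>2 / 2"
    using inv len unfolding moment_inv_def by (metis Suc_1 Suc_le_lessD less_imp_le)
  moreover have "cmass (cs ! 0) + cmass (cs ! 1) \<le> 1"
  proof -
    have "(\<Sum>l<2. cmass (cs ! l)) \<le> (\<Sum>l<length cs. cmass (cs ! l))"
      using len pos by (intro sum_mono2) (auto simp: less_imp_le)
    then show ?thesis using total' len by (simp add: prefix_sum_conv_sum numeral_2_eq_2)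
  qed
  ultimately have "0 < real k / real n" "real k / real n < 1"
    using len \<open>0 < cmass (cs ! 0)\<close> \<open>0 < cmass (cs ! 1)\<close> by (simp_all add: prefix_sum_conv_sum)
  then have "0 < k" "k < n" using \<open>n \<noteq> 0\<close> by (simp_all add: zero_less_divide_iff divide_less_eq)
  then show ?thesis unfolding last_collision_eq_def
    using first moment[of 1] len p \<open>prefix_sum cmass cs 1 = _\<close>
    by (intro exI[of _ k]) (simp add: mult.commute)
qed

lemma time_to_single_last_collision_eq:
  assumes "moment_inv n x t cs" "sorted (map cpos cs)" "2 \<le> length cs" "length cs \<le> Suc f"
  shows "0 \<le> time_to_single f cs \<and> last_collision_eq n x (t + time_to_single f cs)"
  using assms
proof (induction f arbitrary: t cs)
  case (Suc f)
  let ?tau = "next_time cs"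
  let ?cs' = "merge (evolve cs ?tau)"
  have pos: "\<forall>c\<in>set cs. 0 < cmass c" using Suc.prems(1) by (simp add: moment_inv_def)
  note step = next_time_props[OF pos Suc.prems(2,3)]
  have time: "time_to_single (Suc f) cs = ?tau + time_to_single f ?cs'"
    using Suc.prems(3) by (simp add: step_def Let_def)
  have inv: "moment_inv n x (t + ?tau) (evolve cs ?tau)"
    by (rule moment_inv_evolve[OF Suc.prems(1)])
  show ?case
  proof (cases "2 \<le> length ?cs'")
    case True
    then show ?thesis
      using Suc.IH[OF moment_inv_merge[OF inv] step(2) True] step Suc.prems(4) time
      by (simp add: add.assoc)
  next
    case False
    then have "time_to_single f ?cs' = 0" by (cases f) auto
    then show ?thesis
      using last_collision_eq_if_merge_single[OF inv] False Suc.prems(3) time step(1) by simp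
  qed
qed simp

lemma length_init_state [simp]: "length (init_state n x) = n"
  by (simp add: init_state_def)

lemma init_state_eq_map_upt:
  "init_state n x = map (\<lambda>l. (1 / real n, (\<Sum>i=1..Suc l. x i) / real n, 0)) [0..<n]"
  unfolding init_state_def by (rule nth_equalityI) (simp_all add: nth_upt del: upt_Suc)

lemma init_state_components:
  assumes "l < n"
  shows "cmass (init_state n x ! l) = 1 / real n"
    "cpos (init_state n x ! l) = (\<Sum>i=1..Suc l. x i) / real n"
    "cvel (init_state n x ! l) = 0"
  using assms by (simp_all add: init_state_eq_map_upt cmass_def cpos_def cvel_def)

lemma moment_inv_init_state: "1 \<le> n \<Longrightarrow> moment_inv n x 0 (init_state n x)"
  unfolding moment_inv_def
proof (intro conjI allI impI)
  assume n: "1 \<le> n"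
  show "\<forall>c\<in>set (init_state n x). 0 < cmass c"
    by (auto simp: init_state_def cmass_def)
  show "sum_list (map cmass (init_state n x)) = 1"
    using prefix_sum_length[of cmass "init_state n x"]
      prefix_sum_conv_sum[of n "init_state n x" cmass] n
    by (simp add: init_state_components)
  fix i assume i: "i \<le> length (init_state n x)"
  have "prefix_sum (\<lambda>c. cmass c * cpos c) (init_state n x) i
      = (\<Sum>l<i. 1 / real n * ((\<Sum>j=1..Suc l. x j) / real n))"
    using i by (simp add: prefix_sum_conv_sum init_state_components)
  also have "\<dots> = init_moment n x i"
    unfolding init_moment_def by (simp add: sum.atLeast1_atMost_eq)
  finally show "\<exists>k\<le>n. prefix_sum cmass (init_state n x) i = real k / real n \<and>
      prefix_sum (\<lambda>c. cmass c * cpos c) (init_state n x) i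
        = init_moment n x k + real k / real n * (1 - real k / real n) * 0\<^sup>2 / 2 \<and>
      prefix_sum (\<lambda>c. cmass c * cvel c) (init_state n x) i
        = real k / real n * (1 - real k / real n) * 0"
    using i by (intro exI[of _ i]) (simp add: prefix_sum_conv_sum init_state_components)
qed

lemma sorted_init_state:
  assumes "\<And>i. 1 \<le> i \<Longrightarrow> i \<le> n \<Longrightarrow> 0 \<le> x i"
  shows "sorted (map cpos (init_state n x))"
  unfolding sorted_iff_nth_Suc
proof (intro allI impI)
  fix l assume "Suc l < length (map cpos (init_state n x))"
  then have l: "Suc l < n" by simp
  have "(\<Sum>i=1..Suc l. x i) \<le> (\<Sum>i=1..Suc (Suc l). x i)"
    using assms[of "Suc (Suc l)"] l by (simp add: sum.cl_ivl_Suc)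
  then show "map cpos (init_state n x) ! l \<le> map cpos (init_state n x) ! Suc l"
    using l by (simp add: init_state_components divide_right_mono)
qed

lemma T_last_last_collision_eq:
  assumes "2 \<le> n" and "\<And>i. 1 \<le> i \<Longrightarrow> i \<le> n \<Longrightarrow> 0 \<le> x i"
  shows "0 \<le> T_last n x" "last_collision_eq n x (T_last n x)"
  using time_to_single_last_collision_eq[OF moment_inv_init_state sorted_init_state, of n x n] assms
  unfolding T_last_def by simp_all

definition cum_deviation :: "(nat \<Rightarrow> real) \<Rightarrow> nat \<Rightarrow> real" where
  "cum_deviation x m = (\<Sum>j=1..m. (\<Sum>i=1..j. x i) - real j)"

lemma init_moment_eq_cum_deviation:
  "init_moment n x m = ((\<Sum>j=1..m. real j) + cum_deviation x m) / (real n)\<^sup>2"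
  unfolding init_moment_def cum_deviation_def
  by (simp add: sum_divide_distrib power2_eq_square flip: sum.distrib)

lemma last_collision_identity:
  fixes K N T :: real
  assumes "0 < N" and "2 * Gn = N * (N + 1)" and "2 * Gk = K * (K + 1)"
    and "K / N * ((Gn + Fn) / N\<^sup>2) = (Gk + Fk) / N\<^sup>2 + K / N * (1 - K / N) * T\<^sup>2 / 2"
  shows "N * K * (N - K) * (T\<^sup>2 - 1) = 2 * K * (Fn - Fk) - 2 * (N - K) * Fk"
proof -
  have "2 * N^3 * (K / N * ((Gn + Fn) / N\<^sup>2)) = 2 * K * (Gn + Fn)"
    using assms(1) by (simp add: power3_eq_cube power2_eq_square field_simps)
  moreover have "2 * N^3 * ((Gk + Fk) / N\<^sup>2 + K / N * (1 - K / N) * T\<^sup>2 / 2)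
      = 2 * N * (Gk + Fk) + N * K * (N - K) * T\<^sup>2"
    using assms(1) by (simp add: power3_eq_cube power2_eq_square field_simps)
  ultimately have "2 * K * (Gn + Fn) = 2 * N * (Gk + Fk) + N * K * (N - K) * T\<^sup>2"
    using assms(4) by metis
  then have "K * (2 * Gn) + 2 * K * Fn = N * (2 * Gk) + 2 * N * Fk + N * K * (N - K) * T\<^sup>2"
    by (simp add: algebra_simps)
  then show ?thesis unfolding assms(2,3) by (simp add: algebra_simps)
qed

text \<open>For \<open>x \<equiv> 1\<close> the last collision equation forces \<open>T = 1\<close>; the deviations \<open>S\<^sub>j - j\<close>
  perturb it by at most \<open>4\<delta>\<close> times the coefficient \<open>(k/n)(1 - k/n)/2\<close> of \<open>T\<^sup>2\<close>.\<close>

lemma last_collision_eq_sq_deviation: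
  assumes eq: "last_collision_eq n x T"
    and dev: "\<And>j. 1 \<le> j \<Longrightarrow> j \<le> n \<Longrightarrow> \<bar>(\<Sum>i=1..j. x i) - real j\<bar> \<le> \<delta> * real n"
  shows "\<bar>T\<^sup>2 - 1\<bar> \<le> 4 * \<delta>"
proof -
  obtain k where k: "0 < k" "k < n" and eq_k: "real k / real n * init_moment n x n
      = init_moment n x k + real k / real n * (1 - real k / real n) * T\<^sup>2 / 2"
    using eq unfolding last_collision_eq_def by blast
  define N K where "N = real n" and "K = real k"
  have KN: "0 < K" "K < N" using k by (simp_all add: K_def N_def)
  let ?F = "cum_deviation x"
  have dev': "\<bar>(\<Sum>i=1..j. x i) - real j\<bar> \<le> \<delta> * N" if "j \<in> {1..n}" for j
    using dev that by (simp add: N_def)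
  have "\<bar>?F k\<bar> \<le> (\<Sum>j=1..k. \<bar>(\<Sum>i=1..j. x i) - real j\<bar>)"
    unfolding cum_deviation_def by (rule sum_abs)
  also have "\<dots> \<le> real (card {1..k}) * (\<delta> * N)"
    using k by (intro sum_bounded_above dev') auto
  finally have bound_k: "\<bar>?F k\<bar> \<le> K * (\<delta> * N)" by (simp add: K_def)
  have "{1..n} = {1..k} \<union> {Suc k..n}" using k by auto
  then have "?F n - ?F k = (\<Sum>j=Suc k..n. (\<Sum>i=1..j. x i) - real j)"
    unfolding cum_deviation_def by (simp add: sum.union_disjoint)
  then have "\<bar>?F n - ?F k\<bar> \<le> (\<Sum>j=Suc k..n. \<bar>(\<Sum>i=1..j. x i) - real j\<bar>)"
    by simp
  also have "\<dots> \<le> real (card {Suc k..n}) * (\<delta> * N)"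
    using k by (intro sum_bounded_above dev') auto
  finally have bound_n: "\<bar>?F n - ?F k\<bar> \<le> (N - K) * (\<delta> * N)"
    using k by (simp add: K_def N_def)
  have identity: "N * K * (N - K) * (T\<^sup>2 - 1) = 2 * K * (?F n - ?F k) - 2 * (N - K) * ?F k"
    using eq_k KN double_gauss_sum_from_Suc_0[where 'a=real, of n]
      double_gauss_sum_from_Suc_0[where 'a=real, of k]
    by (intro last_collision_identity[where Gn="\<Sum>j=1..n. real j" and Gk="\<Sum>j=1..k. real j"])
      (simp_all add: init_moment_eq_cum_deviation N_def K_def)
  have "N * K * (N - K) * \<bar>T\<^sup>2 - 1\<bar> = \<bar>N * K * (N - K) * (T\<^sup>2 - 1)\<bar>"
    using KN by (simp add: abs_mult)
  also have "\<dots> \<le> \<bar>2 * K * (?F n - ?F k)\<bar> + \<bar>2 * (N - K) * ?F k\<bar>"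
    unfolding identity by (rule abs_triangle_ineq4)
  also have "\<dots> = 2 * K * \<bar>?F n - ?F k\<bar> + 2 * (N - K) * \<bar>?F k\<bar>"
    using KN by (simp add: abs_mult)
  also have "\<dots> \<le> 2 * K * ((N - K) * (\<delta> * N)) + 2 * (N - K) * (K * (\<delta> * N))"
    using bound_n bound_k KN by (intro add_mono mult_left_mono) auto
  also have "\<dots> = N * K * (N - K) * (4 * \<delta>)" by (simp add: algebra_simps)
  finally show ?thesis using KN by (simp add: mult_le_cancel_left_pos)
qed

lemma abs_diff_one_le_abs_sq_diff_one: "0 \<le> (T::real) \<Longrightarrow> \<bar>T - 1\<bar> \<le> \<bar>T\<^sup>2 - 1\<bar>"
proof -
  assume T: "0 \<le> T"
  have "T\<^sup>2 - 1 = (T - 1) * (T + 1)" by (simp add: power2_eq_square algebra_simps)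
  then have "\<bar>T\<^sup>2 - 1\<bar> = \<bar>T - 1\<bar> * (T + 1)" using T by (simp add: abs_mult)
  then show ?thesis using T by (simp add: mult_le_cancel_left1)
qed

text \<open>Consecutive grid points \<open>r n div m\<close> are at most \<open>n/m + 1\<close> apart, so monotonicity
  transfers the bound from the grid to all of \<open>0..n\<close>.\<close>

lemma monotone_deviation_from_grid:
  fixes S :: "nat \<Rightarrow> real"
  assumes mono: "\<And>i j. i \<le> j \<Longrightarrow> j \<le> n \<Longrightarrow> S i \<le> S j" and m: "1 \<le> m"
    and grid: "\<And>r. r \<le> m \<Longrightarrow> \<bar>S (r * n div m) - real (r * n div m)\<bar> \<le> a"
    and j: "j \<le> n"
  shows "\<bar>S j - real j\<bar> \<le> a + real n / real m + 1"
proof (cases "j = n")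
  case True
  then have "\<bar>S j - real j\<bar> \<le> a" using grid[of m] m by simp
  moreover have "0 \<le> real n / real m" by simp
  ultimately show ?thesis by linarith
next
  case False
  define r where "r = j * m div n"
  define lo hi where "lo = r * n div m" and "hi = Suc r * n div m"
  have r: "r < m" unfolding r_def using False j m by (simp add: div_less_iff_less_mult)
  have "lo \<le> j * m div m"
    unfolding lo_def r_def by (intro div_le_mono) (simp add: div_times_less_eq_dividend)
  then have lo: "lo \<le> j" using m by simp
  have "0 < n" using False j by simp
  then have "j * m < Suc r * n"
    using div_mult_mod_eq[of "j * m" n] mod_less_divisor[of n "j * m"] unfolding r_def mult_Suc
    by linarith
  then have "j * m div m \<le> hi" unfolding hi_def by (intro div_le_mono) simp
  then have hi: "j \<le> hi" using m by simp
  have "Suc r * n \<le> m * n" using r by (intro mult_le_mono1) simp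
  then have "hi \<le> m * n div m" unfolding hi_def by (rule div_le_mono)
  then have hi_n: "hi \<le> n" using m by simp
  have "real hi \<le> real (Suc r * n) / real m" unfolding hi_def by (rule of_nat_div_le_of_nat)
  moreover have "real (r * n) / real m < real lo + 1"
  proof -
    have "r * n mod m < m" using m by simp
    moreover have "lo * m + r * n mod m = r * n" unfolding lo_def by (rule div_mult_mod_eq)
    ultimately have "r * n < m * (lo + 1)" by (simp add: algebra_simps)
    then have "real (r * n) < real m * (real lo + 1)"
      by (metis of_nat_1 of_nat_add of_nat_less_iff of_nat_mult)
    then show ?thesis using m by (simp add: divide_less_eq mult.commute)
  qed
  moreover have "real (Suc r * n) / real m = real (r * n) / real m + real n / real m"
    by (simp add: add_divide_distrib algebra_simps)
  ultimately have "real hi - real lo \<le> real n / real m + 1" by linarith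
  moreover have "S lo \<le> S j" "S j \<le> S hi" using mono lo hi hi_n j by auto
  moreover have "\<bar>S hi - real hi\<bar> \<le> a" "\<bar>S lo - real lo\<bar> \<le> a"
    using grid[of "Suc r"] grid[of r] r unfolding hi_def lo_def by simp_all
  moreover have "real lo \<le> real j" "real j \<le> real hi" using lo hi by simp_all
  ultimately show ?thesis unfolding abs_le_iff by linarith
qed

lemma T_last_close_to_one:
  assumes n: "2 \<le> n" and m: "1 \<le> m" and nonneg: "\<And>i. 1 \<le> i \<Longrightarrow> i \<le> n \<Longrightarrow> 0 \<le> x i"
    and mesh: "real n / real m + 1 \<le> \<delta> * real n / 2"
    and grid: "\<And>r. r \<le> m \<Longrightarrow> \<bar>\<Sum>i=1..r * n div m. x i - 1\<bar> \<le> \<delta> * real n / 2"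
  shows "\<bar>T_last n x - 1\<bar> \<le> 4 * \<delta>"
proof -
  define S where "S j = (\<Sum>i=1..j. x i)" for j
  have close: "\<bar>S j - real j\<bar> \<le> \<delta> * real n / 2 + real n / real m + 1" if "j \<le> n" for j
  proof (rule monotone_deviation_from_grid[OF _ m _ that])
    show "S i \<le> S j" if "i \<le> j" "j \<le> n" for i j
      unfolding S_def using that nonneg by (intro sum_mono2) auto
    show "\<bar>S (r * n div m) - real (r * n div m)\<bar> \<le> \<delta> * real n / 2" if "r \<le> m" for r
      using grid[OF that] by (simp add: S_def sum_subtractf)
  qed
  have dev: "\<bar>(\<Sum>i=1..j. x i) - real j\<bar> \<le> \<delta> * real n" if "1 \<le> j" "j \<le> n" for j
    using close[OF that(2)] mesh unfolding S_def by linarith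
  have "0 \<le> T_last n x" "last_collision_eq n x (T_last n x)"
    using T_last_last_collision_eq[of n x] n nonneg by auto
  then show ?thesis
    using last_collision_eq_sq_deviation[OF _ dev] abs_diff_one_le_abs_sq_diff_one by fastforce
qed

section \<open>Measurability of the collision dynamics\<close>

text \<open>A random state is handled through its length and its padded components: the length is
  bounded, so every function of the state can be measured separately on the finitely many
  events \<open>length = L\<close>, where the dynamics is given by explicit formulas.\<close>

definition cluster_nth :: "cluster list \<Rightarrow> nat \<Rightarrow> cluster" where
  "cluster_nth cs i = (if i < length cs then cs ! i else (0, 0, 0))"

definition measurable_cluster :: "'a measure \<Rightarrow> ('a \<Rightarrow> cluster) \<Rightarrow> bool" where
  "measurable_cluster M c \<longleftrightarrow> (\<lambda>\<omega>. cmass (c \<omega>)) \<in> borel_measurable M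
      \<and> (\<lambda>\<omega>. cpos (c \<omega>)) \<in> borel_measurable M \<and> (\<lambda>\<omega>. cvel (c \<omega>)) \<in> borel_measurable M"

definition measurable_state :: "'a measure \<Rightarrow> ('a \<Rightarrow> cluster list) \<Rightarrow> bool" where
  "measurable_state M F \<longleftrightarrow> (\<exists>N. \<forall>\<omega>\<in>space M. length (F \<omega>) \<le> N)
      \<and> (\<lambda>\<omega>. real (length (F \<omega>))) \<in> borel_measurable M
      \<and> (\<forall>i. measurable_cluster M (\<lambda>\<omega>. cluster_nth (F \<omega>) i))"

lemma map_cluster_nth: "map (cluster_nth cs) [0..<length cs] = cs"
  by (rule nth_equalityI) (simp_all add: cluster_nth_def)

lemma measurable_state_nth:
  "measurable_state M F \<Longrightarrow> measurable_cluster M (\<lambda>\<omega>. cluster_nth (F \<omega>) i)"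
  by (simp add: measurable_state_def)

lemma borel_measurable_by_length:
  fixes h :: "'a \<Rightarrow> real" and G :: "nat \<Rightarrow> 'a \<Rightarrow> real"
  assumes F: "measurable_state M F" and G: "\<And>L. G L \<in> borel_measurable M"
    and h: "\<And>\<omega>. \<omega> \<in> space M \<Longrightarrow> h \<omega> = G (length (F \<omega>)) \<omega>"
  shows "h \<in> borel_measurable M"
proof -
  obtain N where N: "\<forall>\<omega>\<in>space M. length (F \<omega>) \<le> N" using F by (auto simp: measurable_state_def)
  have len: "(\<lambda>\<omega>. real (length (F \<omega>))) \<in> borel_measurable M"
    using F by (simp add: measurable_state_def)
  have "{\<omega> \<in> space M. real (length (F \<omega>)) = real L} \<in> sets M" for L
    using measurable_equality_set[OF len, of "\<lambda>_. real L"] by simp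
  then have "(\<lambda>\<omega>. \<Sum>L\<le>N. if real (length (F \<omega>)) = real L then G L \<omega> else 0) \<in> borel_measurable M"
    using G by (intro borel_measurable_sum measurable_If) auto
  moreover have "h \<omega> = (\<Sum>L\<le>N. if real (length (F \<omega>)) = real L then G L \<omega> else 0)"
    if "\<omega> \<in> space M" for \<omega>
  proof -
    have "(\<Sum>L\<le>N. if real (length (F \<omega>)) = real L then G L \<omega> else 0)
        = (\<Sum>L\<le>N. if length (F \<omega>) = L then G L \<omega> else 0)" by simp
    also have "\<dots> = G (length (F \<omega>)) \<omega>" using N that by (simp add: sum.delta')
    finally show ?thesis using h[OF that] by simp
  qed
  then have "h \<in> borel_measurable M \<longleftrightarrow>
      (\<lambda>\<omega>. \<Sum>L\<le>N. if real (length (F \<omega>)) = real L then G L \<omega> else 0) \<in> borel_measurable M"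
    by (rule measurable_cong)
  ultimately show ?thesis by simp
qed

lemma measurable_state_by_length:
  assumes F: "measurable_state M F" and G: "\<And>L. measurable_state M (G L)"
    and K: "\<And>\<omega>. \<omega> \<in> space M \<Longrightarrow> K \<omega> = G (length (F \<omega>)) \<omega>"
  shows "measurable_state M K"
proof -
  obtain N where N: "\<forall>\<omega>\<in>space M. length (F \<omega>) \<le> N" using F by (auto simp: measurable_state_def)
  obtain B where B: "\<And>L. \<forall>\<omega>\<in>space M. length (G L \<omega>) \<le> B L"
    using G unfolding measurable_state_def by metis
  have via_length: "(\<lambda>\<omega>. q (K \<omega>)) \<in> borel_measurable M"
    if "\<And>L. (\<lambda>\<omega>. q (G L \<omega>)) \<in> borel_measurable M" for q :: "cluster list \<Rightarrow> real"
    using F that by (rule borel_measurable_by_length) (simp add: K)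
  show ?thesis unfolding measurable_state_def measurable_cluster_def
  proof (intro conjI allI exI ballI)
    fix \<omega> assume \<omega>: "\<omega> \<in> space M"
    then have "length (K \<omega>) \<le> B (length (F \<omega>))" using K B by simp
    also have "\<dots> \<le> (\<Sum>L\<le>N. B L)" using N \<omega> by (intro member_le_sum) auto
    finally show "length (K \<omega>) \<le> (\<Sum>L\<le>N. B L)" .
  next
    show "(\<lambda>\<omega>. real (length (K \<omega>))) \<in> borel_measurable M"
      by (rule via_length) (use G in \<open>simp add: measurable_state_def\<close>)
  next
    fix i
    show "(\<lambda>\<omega>. cmass (cluster_nth (K \<omega>) i)) \<in> borel_measurable M"
      "(\<lambda>\<omega>. cpos (cluster_nth (K \<omega>) i)) \<in> borel_measurable M"
      "(\<lambda>\<omega>. cvel (cluster_nth (K \<omega>) i)) \<in> borel_measurable M"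
      by (rule via_length; use G in \<open>simp add: measurable_state_def measurable_cluster_def\<close>)+
  qed
qed

lemma measurable_cluster_const: "measurable_cluster M (\<lambda>\<omega>. c)"
  by (simp add: measurable_cluster_def)

lemma measurable_cluster_If:
  "{\<omega>\<in>space M. P \<omega>} \<in> sets M \<Longrightarrow> measurable_cluster M a \<Longrightarrow> measurable_cluster M b \<Longrightarrow>
   measurable_cluster M (\<lambda>\<omega>. if P \<omega> then a \<omega> else b \<omega>)"
  unfolding measurable_cluster_def by (auto intro!: measurable_If simp: if_distrib)

lemma measurable_cluster_combine:
  "measurable_cluster M a \<Longrightarrow> measurable_cluster M b \<Longrightarrow>
   measurable_cluster M (\<lambda>\<omega>. combine (a \<omega>) (b \<omega>))"
  unfolding measurable_cluster_def cvel_combine cmass_combine cpos_combine by auto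

lemma measurable_state_map_upt:
  assumes "\<And>i. i < L \<Longrightarrow> measurable_cluster M (g i)"
  shows "measurable_state M (\<lambda>\<omega>. map (\<lambda>i. g i \<omega>) [0..<L])"
proof -
  have "(\<lambda>\<omega>. cluster_nth (map (\<lambda>i. g i \<omega>) [0..<L]) i)
      = (\<lambda>\<omega>. if i < L then g i \<omega> else (0, 0, 0))" for i
    by (auto simp: cluster_nth_def)
  moreover have "measurable_cluster M (\<lambda>\<omega>. if i < L then g i \<omega> else (0, 0, 0))" for i
    using assms[of i] by (cases "i < L") (simp_all add: measurable_cluster_const)
  ultimately show ?thesis unfolding measurable_state_def by auto
qed

lemma measurable_state_Cons:
  assumes c: "measurable_cluster M c" and F: "measurable_state M F"
  shows "measurable_state M (\<lambda>\<omega>. c \<omega> # F \<omega>)"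
proof -
  obtain N where "\<forall>\<omega>\<in>space M. length (F \<omega>) \<le> N" using F by (auto simp: measurable_state_def)
  then have "\<forall>\<omega>\<in>space M. length (c \<omega> # F \<omega>) \<le> Suc N" by simp
  moreover have "measurable_cluster M (\<lambda>\<omega>. cluster_nth (c \<omega> # F \<omega>) i)" for i
    using c measurable_state_nth[OF F, of "i - 1"]
    by (cases i) (simp_all add: cluster_nth_def cong: if_cong)
  ultimately show ?thesis using F unfolding measurable_state_def by auto
qed

lemma measurable_state_If:
  assumes P: "{\<omega>\<in>space M. P \<omega>} \<in> sets M"
    and F: "measurable_state M F" and G: "measurable_state M G"
  shows "measurable_state M (\<lambda>\<omega>. if P \<omega> then F \<omega> else G \<omega>)"
  unfolding measurable_state_def
proof (intro conjI allI)
  obtain N1 N2 where "\<forall>\<omega>\<in>space M. length (F \<omega>) \<le> N1" "\<forall>\<omega>\<in>space M. length (G \<omega>) \<le> N2"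
    using F G by (auto simp: measurable_state_def)
  then show "\<exists>N. \<forall>\<omega>\<in>space M. length (if P \<omega> then F \<omega> else G \<omega>) \<le> N"
    by (intro exI[of _ "N1 + N2"]) auto
  have "(\<lambda>\<omega>. if P \<omega> then real (length (F \<omega>)) else real (length (G \<omega>))) \<in> borel_measurable M"
    using F G P by (intro measurable_If) (simp_all add: measurable_state_def)
  then show "(\<lambda>\<omega>. real (length (if P \<omega> then F \<omega> else G \<omega>))) \<in> borel_measurable M"
    by (simp add: if_distrib)
  fix i
  have "measurable_cluster M (\<lambda>\<omega>. if P \<omega> then cluster_nth (F \<omega>) i else cluster_nth (G \<omega>) i)"
    using F G by (intro measurable_cluster_If[OF P]) (simp_all add: measurable_state_def)
  moreover have "(\<lambda>\<omega>. cluster_nth (if P \<omega> then F \<omega> else G \<omega>) i)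
      = (\<lambda>\<omega>. if P \<omega> then cluster_nth (F \<omega>) i else cluster_nth (G \<omega>) i)"
    by auto
  ultimately show "measurable_cluster M (\<lambda>\<omega>. cluster_nth (if P \<omega> then F \<omega> else G \<omega>) i)"
    by simp
qed

lemma measurable_state_merge_map_upt:
  assumes "\<And>i. measurable_cluster M (g i)"
  shows "measurable_state M (\<lambda>\<omega>. merge (map (\<lambda>i. g i \<omega>) [0..<L]))"
  using assms
proof (induction L arbitrary: g rule: less_induct)
  case (less L)
  show ?case
  proof (cases "L < 2")
    case True
    then have "merge (map (\<lambda>i. g i \<omega>) [0..<L]) = map (\<lambda>i. g i \<omega>) [0..<L]" for \<omega>
      by (auto simp: less_2_cases_iff)
    then show ?thesis using measurable_state_map_upt[of L M g] less.prems by simp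
  next
    case False
    then obtain L' where L: "L = Suc (Suc L')" by (metis add_2_eq_Suc le_add_diff_inverse not_less)
    define g' where "g' = (\<lambda>i \<omega>. if i = 0 then combine (g 0 \<omega>) (g 1 \<omega>) else g (Suc i) \<omega>)"
    have "merge (map (\<lambda>i. g i \<omega>) [0..<L]) =
        (if cpos (g 0 \<omega>) = cpos (g 1 \<omega>) then merge (map (\<lambda>i. g' i \<omega>) [0..<Suc L'])
         else g 0 \<omega> # merge (map (\<lambda>i. g (Suc i) \<omega>) [0..<Suc L']))" for \<omega>
      unfolding L map_upt_Suc g'_def by simp
    moreover have "measurable_cluster M (g' i)" for i
      using less.prems by (cases i) (auto simp: g'_def measurable_cluster_combine)
    then have "measurable_state M (\<lambda>\<omega>. merge (map (\<lambda>i. g' i \<omega>) [0..<Suc L']))"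
      by (intro less.IH) (simp_all add: L)
    moreover have "measurable_state M (\<lambda>\<omega>. g 0 \<omega> # merge (map (\<lambda>i. g (Suc i) \<omega>) [0..<Suc L']))"
      using less.prems L by (intro measurable_state_Cons less.IH) auto
    moreover have "{\<omega> \<in> space M. cpos (g 0 \<omega>) = cpos (g 1 \<omega>)} \<in> sets M"
      using less.prems by (intro measurable_equality_set) (auto simp: measurable_cluster_def)
    ultimately show ?thesis by (simp add: measurable_state_If)
  qed
qed

lemma measurable_state_merge:
  assumes F: "measurable_state M F"
  shows "measurable_state M (\<lambda>\<omega>. merge (F \<omega>))"
proof (rule measurable_state_by_length[OF F])
  show "measurable_state M (\<lambda>\<omega>. merge (map (cluster_nth (F \<omega>)) [0..<L]))" for L
    using measurable_state_nth[OF F] by (rule measurable_state_merge_map_upt)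
  show "merge (F \<omega>) = merge (map (cluster_nth (F \<omega>)) [0..<length (F \<omega>)])" for \<omega>
    by (simp only: map_cluster_nth)
qed

definition accel_len :: "nat \<Rightarrow> cluster list \<Rightarrow> nat \<Rightarrow> real" where
  "accel_len L cs k = (\<Sum>i\<in>{k<..<L}. cmass (cluster_nth cs i)) - (\<Sum>i<k. cmass (cluster_nth cs i))"

lemma accel_eq_accel_len: "k < length cs \<Longrightarrow> accel cs k = accel_len (length cs) cs k"
  unfolding accel_def accel_len_def cluster_nth_def
  by (intro arg_cong2[where f="(-)"] sum.cong) auto

lemma borel_measurable_accel_len:
  "measurable_state M F \<Longrightarrow> (\<lambda>\<omega>. accel_len L (F \<omega>) k) \<in> borel_measurable M"
  unfolding accel_len_def using measurable_state_nth[of M F] unfolding measurable_cluster_def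
  by (intro borel_measurable_diff borel_measurable_sum) auto

lemma measurable_state_evolve:
  assumes F: "measurable_state M F" and tau: "tau \<in> borel_measurable M"
  shows "measurable_state M (\<lambda>\<omega>. evolve (F \<omega>) (tau \<omega>))"
proof (rule measurable_state_by_length[OF F])
  define EV where "EV L k \<omega> = (cmass (cluster_nth (F \<omega>) k),
      cpos (cluster_nth (F \<omega>) k) + cvel (cluster_nth (F \<omega>) k) * tau \<omega>
        + accel_len L (F \<omega>) k * (tau \<omega>)\<^sup>2 / 2,
      cvel (cluster_nth (F \<omega>) k) + accel_len L (F \<omega>) k * tau \<omega>)" for L k \<omega>
  have "measurable_cluster M (EV L k)" for L k
  proof -
    have "(\<lambda>\<omega>. cmass (cluster_nth (F \<omega>) k)) \<in> borel_measurable M"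
      "(\<lambda>\<omega>. cpos (cluster_nth (F \<omega>) k)) \<in> borel_measurable M"
      "(\<lambda>\<omega>. cvel (cluster_nth (F \<omega>) k)) \<in> borel_measurable M"
      using measurable_state_nth[OF F, of k] by (simp_all add: measurable_cluster_def)
    with borel_measurable_accel_len[OF F, of L k] tau show ?thesis
      by (simp add: measurable_cluster_def EV_def cmass_def cpos_def cvel_def)
  qed
  then show "measurable_state M (\<lambda>\<omega>. map (\<lambda>k. EV L k \<omega>) [0..<L])" for L
    by (intro measurable_state_map_upt)
  show "evolve (F \<omega>) (tau \<omega>) = map (\<lambda>k. EV (length (F \<omega>)) k \<omega>) [0..<length (F \<omega>)]" for \<omega>
    unfolding evolve_def EV_def by (auto simp: cluster_nth_def accel_eq_accel_len intro!: map_cong)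
qed

lemma borel_measurable_first_zero:
  assumes "A \<in> borel_measurable M" "B \<in> borel_measurable M" "D \<in> borel_measurable M"
  shows "(\<lambda>\<omega>. first_zero (A \<omega>) (B \<omega>) (D \<omega>)) \<in> borel_measurable M"
  unfolding first_zero_def using assms by measurable

lemma borel_measurable_next_time:
  assumes F: "measurable_state M F" and pos: "\<forall>\<omega>\<in>space M. \<forall>c\<in>set (F \<omega>). 0 < cmass c"
  shows "(\<lambda>\<omega>. next_time (F \<omega>)) \<in> borel_measurable M"
proof (rule borel_measurable_by_length[OF F])
  define coll where "coll L k \<omega> = first_zero
      (cpos (cluster_nth (F \<omega>) (Suc k)) - cpos (cluster_nth (F \<omega>) k))
      (cvel (cluster_nth (F \<omega>) (Suc k)) - cvel (cluster_nth (F \<omega>) k))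
      (accel_len L (F \<omega>) (Suc k) - accel_len L (F \<omega>) k)" for L k \<omega>
  have "coll L k \<in> borel_measurable M" for L k
    unfolding coll_def using measurable_state_nth[OF F] borel_measurable_accel_len[OF F]
    by (intro borel_measurable_first_zero borel_measurable_diff) (auto simp: measurable_cluster_def)
  then show "(\<lambda>\<omega>. Min ((\<lambda>k. coll L k \<omega>) ` {..<L - 1})) \<in> borel_measurable M" for L
    by (cases "L - 1 = 0") (auto intro: borel_measurable_Min)
  show "next_time (F \<omega>) = Min ((\<lambda>k. coll (length (F \<omega>)) k \<omega>) ` {..<length (F \<omega>) - 1})"
    if "\<omega> \<in> space M" for \<omega>
  proof -
    have "coll_time (F \<omega>) k = coll (length (F \<omega>)) k \<omega>" if "k < length (F \<omega>) - 1" for k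
    proof -
      from that have k: "Suc k < length (F \<omega>)" by simp
      show ?thesis using coll_time_eq_first_zero(1)[OF bspec[OF pos \<open>\<omega> \<in> space M\<close>] k] k
        by (simp add: coll_def cluster_nth_def accel_eq_accel_len)
    qed
    then show ?thesis unfolding next_time_def by (intro arg_cong[where f=Min] image_cong) auto
  qed
qed

lemma borel_measurable_time_to_single:
  assumes "measurable_state M F" and "\<forall>\<omega>\<in>space M. \<forall>c\<in>set (F \<omega>). 0 < cmass c"
  shows "(\<lambda>\<omega>. time_to_single f (F \<omega>)) \<in> borel_measurable M"
  using assms
proof (induction f arbitrary: F)
  case (Suc f)
  define tau where "tau \<omega> = next_time (F \<omega>)" for \<omega>
  define F' where "F' \<omega> = merge (evolve (F \<omega>) (tau \<omega>))" for \<omega>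
  have tau: "tau \<in> borel_measurable M"
    unfolding tau_def by (rule borel_measurable_next_time[OF Suc.prems])
  have "measurable_state M F'"
    unfolding F'_def by (intro measurable_state_merge measurable_state_evolve Suc.prems(1) tau)
  moreover have "\<forall>\<omega>\<in>space M. \<forall>c\<in>set (F' \<omega>). 0 < cmass c"
    unfolding F'_def using Suc.prems(2) by (intro ballI merge_pos_mass evolve_pos_mass) auto
  ultimately have "(\<lambda>\<omega>. time_to_single f (F' \<omega>)) \<in> borel_measurable M" by (rule Suc.IH)
  moreover have "time_to_single (Suc f) (F \<omega>)
      = (if real (length (F \<omega>)) \<le> 1 then 0 else tau \<omega> + time_to_single f (F' \<omega>))" for \<omega>
    by (simp add: step_def Let_def tau_def F'_def)
  moreover have "(\<lambda>\<omega>. real (length (F \<omega>))) \<in> borel_measurable M"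
    using Suc.prems(1) by (simp add: measurable_state_def)
  then have "{\<omega> \<in> space M. real (length (F \<omega>)) \<le> 1} \<in> sets M" by measurable
  ultimately show ?case using tau by simp
qed simp

lemma borel_measurable_T_last:
  fixes X :: "nat \<Rightarrow> 'a \<Rightarrow> real"
  assumes X: "\<And>i. X i \<in> borel_measurable M"
  shows "(\<lambda>\<omega>. T_last n (\<lambda>i. X i \<omega>)) \<in> borel_measurable M"
  unfolding T_last_def
proof (rule borel_measurable_time_to_single)
  show "measurable_state M (\<lambda>\<omega>. init_state n (\<lambda>i. X i \<omega>))"
    unfolding init_state_eq_map_upt using X
    by (intro measurable_state_map_upt)
      (simp add: measurable_cluster_def cmass_def cpos_def cvel_def)
  show "\<forall>\<omega>\<in>space M. \<forall>c\<in>set (init_state n (\<lambda>i. X i \<omega>)). 0 < cmass c"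
    by (auto simp: init_state_def cmass_def)
qed

section \<open>Chebyshev bounds for the partial sums\<close>

lemma integrable_integral_eq_if_distr_eq:
  fixes Y Z :: "'a \<Rightarrow> real" and g :: "real \<Rightarrow> real"
  assumes Y: "Y \<in> borel_measurable M" and Z: "Z \<in> borel_measurable M"
    and distr: "distr M borel Y = distr M borel Z" and g: "g \<in> borel_measurable borel"
  shows "integrable M (\<lambda>\<omega>. g (Y \<omega>)) \<longleftrightarrow> integrable M (\<lambda>\<omega>. g (Z \<omega>))"
    "integral\<^sup>L M (\<lambda>\<omega>. g (Y \<omega>)) = integral\<^sup>L M (\<lambda>\<omega>. g (Z \<omega>))"
  using integrable_distr_eq[OF Y g] integrable_distr_eq[OF Z g]
    integral_distr[OF Y g] integral_distr[OF Z g] distr by simp_all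

context prob_space
begin

lemma centered_product_moments:
  fixes X :: "nat \<Rightarrow> 'a \<Rightarrow> real"
  assumes indep: "indep_vars (\<lambda>_. borel) X UNIV"
    and ident: "\<And>i. distr M borel (X i) = distr M borel (X 0)"
    and int1: "integrable M (X 0)" and mean: "integral\<^sup>L M (X 0) = 1"
    and int2: "integrable M (\<lambda>\<omega>. (X 0 \<omega>)\<^sup>2)"
  shows "integrable M (\<lambda>\<omega>. X a \<omega> - 1)" "integral\<^sup>L M (\<lambda>\<omega>. X a \<omega> - 1) = 0"
    "integrable M (\<lambda>\<omega>. (X a \<omega> - 1) * (X b \<omega> - 1))"
    "integral\<^sup>L M (\<lambda>\<omega>. (X a \<omega> - 1) * (X b \<omega> - 1))
      = (if a = b then integral\<^sup>L M (\<lambda>\<omega>. (X 0 \<omega> - 1)\<^sup>2) else 0)"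
proof -
  have rv: "X i \<in> borel_measurable M" for i using indep unfolding indep_vars_def by simp
  define Y where "Y = (\<lambda>i \<omega>. X i \<omega> - 1)"
  note ident_moment = integrable_integral_eq_if_distr_eq[OF rv rv ident]
  have intY: "integrable M (Y i)" for i
    using ident_moment(1)[of "\<lambda>x. x" i] int1 by (simp add: Y_def)
  have EY: "integral\<^sup>L M (Y i) = 0" for i
    using ident_moment(2)[of "\<lambda>x. x" i] ident_moment(1)[of "\<lambda>x. x" i] int1 mean prob_space
    by (simp add: Y_def)
  have "integrable M (\<lambda>\<omega>. (X 0 \<omega>)\<^sup>2 - 2 * X 0 \<omega> + 1)" using int1 int2 by simp
  then have "integrable M (\<lambda>\<omega>. (X 0 \<omega> - 1)\<^sup>2)" by (simp add: power2_eq_square algebra_simps)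
  then have intY2: "integrable M (\<lambda>\<omega>. Y i \<omega> * Y i \<omega>)" for i
    using ident_moment(1)[of "\<lambda>x. (x - 1)\<^sup>2" i] by (simp add: Y_def power2_eq_square)
  have EY2: "integral\<^sup>L M (\<lambda>\<omega>. Y i \<omega> * Y i \<omega>) = integral\<^sup>L M (\<lambda>\<omega>. (X 0 \<omega> - 1)\<^sup>2)" for i
    using ident_moment(2)[of "\<lambda>x. (x - 1)\<^sup>2" i] by (simp add: Y_def power2_eq_square)
  have indep_Y: "indep_vars (\<lambda>_. borel) Y UNIV"
    unfolding Y_def by (rule indep_vars_compose2[OF indep]) simp
  have pair: "indep_var borel (Y a) borel (Y b)" if "a \<noteq> b"
  proof -
    have "indep_vars (\<lambda>_. borel) Y {a, b}" by (rule indep_vars_subset[OF indep_Y]) simp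
    from indep_vars_sum[OF _ _ this] that show ?thesis by simp
  qed
  show "integrable M (\<lambda>\<omega>. X a \<omega> - 1)" "integral\<^sup>L M (\<lambda>\<omega>. X a \<omega> - 1) = 0"
    using intY EY by (simp_all add: Y_def)
  show "integrable M (\<lambda>\<omega>. (X a \<omega> - 1) * (X b \<omega> - 1))"
    using intY2[of a] pair intY indep_var_integrable by (cases "a = b") (auto simp: Y_def)
  show "integral\<^sup>L M (\<lambda>\<omega>. (X a \<omega> - 1) * (X b \<omega> - 1))
      = (if a = b then integral\<^sup>L M (\<lambda>\<omega>. (X 0 \<omega> - 1)\<^sup>2) else 0)"
    using EY2[of a] indep_var_lebesgue_integral[OF pair intY intY] EY by (auto simp: Y_def)
qed

lemma centered_sum_moments:
  fixes X :: "nat \<Rightarrow> 'a \<Rightarrow> real"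
  assumes indep: "indep_vars (\<lambda>_. borel) X UNIV"
    and ident: "\<And>i. distr M borel (X i) = distr M borel (X 0)"
    and int1: "integrable M (X 0)" and mean: "integral\<^sup>L M (X 0) = 1"
    and int2: "integrable M (\<lambda>\<omega>. (X 0 \<omega>)\<^sup>2)"
    and I: "finite I"
  shows "integrable M (\<lambda>\<omega>. (\<Sum>i\<in>I. X i \<omega> - 1)\<^sup>2)"
    "integral\<^sup>L M (\<lambda>\<omega>. \<Sum>i\<in>I. X i \<omega> - 1) = 0"
    "integral\<^sup>L M (\<lambda>\<omega>. (\<Sum>i\<in>I. X i \<omega> - 1)\<^sup>2) = card I * integral\<^sup>L M (\<lambda>\<omega>. (X 0 \<omega> - 1)\<^sup>2)"
proof -
  note moments = centered_product_moments[OF indep ident int1 mean int2]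
  have square: "(\<lambda>\<omega>. (\<Sum>i\<in>I. X i \<omega> - 1)\<^sup>2)
      = (\<lambda>\<omega>. \<Sum>a\<in>I. \<Sum>b\<in>I. (X a \<omega> - 1) * (X b \<omega> - 1))"
    by (simp add: power2_eq_square sum_product)
  show "integrable M (\<lambda>\<omega>. (\<Sum>i\<in>I. X i \<omega> - 1)\<^sup>2)" unfolding square using moments by simp
  show "integral\<^sup>L M (\<lambda>\<omega>. \<Sum>i\<in>I. X i \<omega> - 1) = 0" using moments by simp
  have "integral\<^sup>L M (\<lambda>\<omega>. \<Sum>a\<in>I. \<Sum>b\<in>I. (X a \<omega> - 1) * (X b \<omega> - 1))
      = (\<Sum>a\<in>I. \<Sum>b\<in>I. integral\<^sup>L M (\<lambda>\<omega>. (X a \<omega> - 1) * (X b \<omega> - 1)))"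
    using moments by simp
  also have "\<dots> = card I * integral\<^sup>L M (\<lambda>\<omega>. (X 0 \<omega> - 1)\<^sup>2)" using I by (simp add: moments)
  finally show "integral\<^sup>L M (\<lambda>\<omega>. (\<Sum>i\<in>I. X i \<omega> - 1)\<^sup>2)
      = card I * integral\<^sup>L M (\<lambda>\<omega>. (X 0 \<omega> - 1)\<^sup>2)"
    unfolding square .
qed

lemma centered_sum_deviation_prob:
  fixes X :: "nat \<Rightarrow> 'a \<Rightarrow> real"
  assumes indep: "indep_vars (\<lambda>_. borel) X UNIV"
    and ident: "\<And>i. distr M borel (X i) = distr M borel (X 0)"
    and int1: "integrable M (X 0)" and mean: "integral\<^sup>L M (X 0) = 1"
    and int2: "integrable M (\<lambda>\<omega>. (X 0 \<omega>)\<^sup>2)"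
    and I: "finite I" and a: "0 < a"
  shows "measure M {\<omega>\<in>space M. a \<le> \<bar>\<Sum>i\<in>I. X i \<omega> - 1\<bar>}
      \<le> card I * integral\<^sup>L M (\<lambda>\<omega>. (X 0 \<omega> - 1)\<^sup>2) / a\<^sup>2"
proof -
  note moments = centered_sum_moments[OF indep ident int1 mean int2 I]
  have "(\<lambda>\<omega>. \<Sum>i\<in>I. X i \<omega> - 1) \<in> borel_measurable M"
    using indep unfolding indep_vars_def by (intro borel_measurable_sum borel_measurable_diff) auto
  from Chebyshev_inequality[OF this _ a] moments show ?thesis by simp
qed

end

lemma grid_mesh_le:
  fixes \<delta> :: real
  assumes \<delta>: "0 < \<delta>" and m: "4 / \<delta> \<le> real m" and n: "4 / \<delta> + 2 \<le> real n"
  shows "real n / real m + 1 \<le> \<delta> * real n / 2"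
proof -
  have "0 < 4 / \<delta>" using \<delta> by simp
  then have "0 < real m" using m by linarith
  then have "1 / real m \<le> \<delta> / 4" using m \<delta> by (simp add: field_simps)
  then have "real n * (1 / real m) \<le> real n * (\<delta> / 4)" by (intro mult_left_mono) auto
  then have "real n / real m \<le> \<delta> * real n / 4" by (simp add: mult.commute)
  moreover have "4 \<le> \<delta> * real n" using n \<delta> by (simp add: field_simps)
  ultimately show ?thesis by linarith
qed

lemma (in prob_space) AE_T_last_deviation_grid:
  fixes X :: "nat \<Rightarrow> 'a \<Rightarrow> real"
  assumes nonneg: "\<And>i. AE \<omega> in M. 0 \<le> X i \<omega>"
    and n: "2 \<le> n" and m: "1 \<le> m" and mesh: "real n / real m + 1 \<le> \<delta> * real n / 2"
  shows "AE \<omega> in M. 4 * \<delta> < \<bar>T_last n (\<lambda>i. X i \<omega>) - 1\<bar> \<longrightarrow>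
    (\<exists>r\<le>m. \<delta> * real n / 2 \<le> \<bar>\<Sum>i\<in>{1..r * n div m}. X i \<omega> - 1\<bar>)"
proof -
  have "AE \<omega> in M. \<forall>i. 0 \<le> X i \<omega>" using nonneg by (simp add: AE_all_countable)
  then show ?thesis
  proof (rule AE_mp, intro AE_I2 impI)
    fix \<omega> assume "\<forall>i. 0 \<le> X i \<omega>" "4 * \<delta> < \<bar>T_last n (\<lambda>i. X i \<omega>) - 1\<bar>"
    with T_last_close_to_one[OF n m _ mesh, of "\<lambda>i. X i \<omega>"]
    show "\<exists>r\<le>m. \<delta> * real n / 2 \<le> \<bar>\<Sum>i\<in>{1..r * n div m}. X i \<omega> - 1\<bar>" by force
  qed
qed

lemma (in prob_space) T_last_deviation_prob_le:
  fixes X :: "nat \<Rightarrow> 'a \<Rightarrow> real"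
  assumes indep: "indep_vars (\<lambda>_. borel) X UNIV"
    and ident: "\<And>i. distr M borel (X i) = distr M borel (X 0)"
    and nonneg: "\<And>i. AE \<omega> in M. 0 \<le> X i \<omega>"
    and int1: "integrable M (X 0)" and mean: "integral\<^sup>L M (X 0) = 1"
    and int2: "integrable M (\<lambda>\<omega>. (X 0 \<omega>)\<^sup>2)"
    and \<delta>: "0 < \<delta>"
  shows "\<exists>C. \<forall>\<^sub>F n in sequentially.
    measure M {\<omega>\<in>space M. 4 * \<delta> < \<bar>T_last n (\<lambda>i. X i \<omega>) - 1\<bar>} \<le> C / real n"
proof -
  define m :: nat where "m = nat \<lceil>4 / \<delta>\<rceil> + 1"
  define V where "V = integral\<^sup>L M (\<lambda>\<omega>. (X 0 \<omega> - 1)\<^sup>2)"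
  define A where "A n r = {\<omega>\<in>space M. \<delta> * real n / 2 \<le> \<bar>\<Sum>i\<in>{1..r * n div m}. X i \<omega> - 1\<bar>}" for n r
  have m: "1 \<le> m" "4 / \<delta> \<le> real m" unfolding m_def by linarith+
  have "X i \<in> borel_measurable M" for i using indep unfolding indep_vars_def by simp
  then have "(\<lambda>\<omega>. \<bar>\<Sum>i\<in>{1..r * n div m}. X i \<omega> - 1\<bar>) \<in> borel_measurable M" for n r by measurable
  then have A_sets: "A n r \<in> sets M" for n r unfolding A_def by measurable
  have A_prob: "measure M (A n r) \<le> 4 * V / (\<delta>\<^sup>2 * real n)" if "r \<le> m" "0 < n" for n r
  proof -
    have "r * n div m \<le> m * n div m" using that by (intro div_le_mono) simp
    then have j: "real (r * n div m) \<le> real n" using m by simp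
    have "0 < \<delta> * real n / 2" using \<delta> that by simp
    from centered_sum_deviation_prob[OF indep ident int1 mean int2
        finite_atLeastAtMost[of 1 "r * n div m"] this]
    have "measure M (A n r) \<le> real (r * n div m) * V / (\<delta> * real n / 2)\<^sup>2"
      unfolding A_def V_def by simp
    also have "\<dots> \<le> real n * V / (\<delta> * real n / 2)\<^sup>2"
      using j by (intro divide_right_mono mult_right_mono) (simp_all add: V_def)
    also have "\<dots> = 4 * V / (\<delta>\<^sup>2 * real n)" using that \<delta> by (simp add: power2_eq_square field_simps)
    finally show ?thesis .
  qed
  have bound: "measure M {\<omega>\<in>space M. 4 * \<delta> < \<bar>T_last n (\<lambda>i. X i \<omega>) - 1\<bar>}
      \<le> real (Suc m) * (4 * V / \<delta>\<^sup>2) / real n"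
    if n: "4 / \<delta> + 2 \<le> real n" for n
  proof -
    have "0 < 4 / \<delta>" using \<delta> by simp
    then have "2 \<le> n" using n by linarith
    from AE_T_last_deviation_grid[where X=X, OF nonneg this m(1) grid_mesh_le[OF \<delta> m(2) n]]
    have "AE \<omega> in M. 4 * \<delta> < \<bar>T_last n (\<lambda>i. X i \<omega>) - 1\<bar> \<longrightarrow> \<omega> \<in> (\<Union>r\<le>m. A n r)"
      using AE_space unfolding A_def by eventually_elim auto
    then have "measure M {\<omega>\<in>space M. 4 * \<delta> < \<bar>T_last n (\<lambda>i. X i \<omega>) - 1\<bar>}
        \<le> measure M (\<Union>r\<le>m. A n r)"
      using A_sets by (intro finite_measure_mono_AE) auto
    also have "\<dots> \<le> (\<Sum>r\<le>m. measure M (A n r))"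
      using A_sets by (intro finite_measure_subadditive_finite) auto
    also have "\<dots> \<le> (\<Sum>r\<le>m. 4 * V / (\<delta>\<^sup>2 * real n))"
      using A_prob \<open>2 \<le> n\<close> by (intro sum_mono) auto
    also have "\<dots> = real (Suc m) * (4 * V / \<delta>\<^sup>2) / real n" by simp
    finally show ?thesis .
  qed
  have "\<forall>\<^sub>F n in sequentially. 4 / \<delta> + 2 \<le> real n"
    using filterlim_real_sequentially by (simp add: filterlim_at_top)
  then have "\<forall>\<^sub>F n in sequentially. measure M {\<omega>\<in>space M. 4 * \<delta> < \<bar>T_last n (\<lambda>i. X i \<omega>) - 1\<bar>}
      \<le> real (Suc m) * (4 * V / \<delta>\<^sup>2) / real n"
    by (rule eventually_mono) (rule bound)
  then show ?thesis by blast
qed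

theorem proposition3:
  fixes M :: "'a measure" and X :: "nat \<Rightarrow> 'a \<Rightarrow> real"
  assumes "prob_space M"
    and "prob_space.indep_vars M (\<lambda>_. borel) X UNIV"
    and "\<And>i. distr M borel (X i) = distr M borel (X 0)"
    and "\<And>i. AE \<omega> in M. 0 \<le> X i \<omega>"
    and "integrable M (X 0)"
    and "integral\<^sup>L M (X 0) = 1"
    and "integrable M (\<lambda>\<omega>. (X 0 \<omega>) ^ 2)"
  shows "(\<forall>n. (\<lambda>\<omega>. T_last n (\<lambda>i. X i \<omega>)) \<in> borel_measurable M)
       \<and> (\<forall>\<epsilon>>0. (\<lambda>n. measure M {\<omega>\<in>space M. \<epsilon> < \<bar>T_last n (\<lambda>i. X i \<omega>) - 1\<bar>})
                   \<longlonglongrightarrow> 0)"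
proof (intro conjI allI impI)
  interpret prob_space M by fact
  fix n
  show "(\<lambda>\<omega>. T_last n (\<lambda>i. X i \<omega>)) \<in> borel_measurable M"
    using assms(2) unfolding indep_vars_def by (intro borel_measurable_T_last) simp
next
  interpret prob_space M by fact
  fix \<epsilon> :: real assume "0 < \<epsilon>"
  then obtain C where bound: "\<forall>\<^sub>F n in sequentially.
      measure M {\<omega>\<in>space M. \<epsilon> < \<bar>T_last n (\<lambda>i. X i \<omega>) - 1\<bar>} \<le> C / real n"
    using T_last_deviation_prob_le[OF assms(2-7), of "\<epsilon> / 4"] by auto
  show "(\<lambda>n. measure M {\<omega>\<in>space M. \<epsilon> < \<bar>T_last n (\<lambda>i. X i \<omega>) - 1\<bar>}) \<longlonglongrightarrow> 0"
    by (rule tendsto_sandwich[OF _ bound tendsto_const lim_const_over_n]) simp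
qed

end
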